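(* Let $r\in\mathbb{N}$, $w,v\in\mathbb{YF}^r$ and $l\in\mathbb{N}_0$ with $h(w,v)\ge l$. Then $$d_r(w,v,l)=d_1(s(w),s(v),l)\cdot r^{\#v-\#w-e(v[l])}.$$
   Context: Fix $r\in\mathbb{N}$. Words and statistics. Consider finite words over $\{1_1,\dots,1_r,2\}$. A letter $1_i$ is a one with digit value $1$; $2$ is a two with digit value $2$. $|x|$ is the sum of digit values, $\#x$ the number of letters, $e(x)$ the number of ones. The graph $\mathbb{YF}^r$. It is the graded graph on all finite words, graded by $|\cdot|$. From $x$ there is a downward edge to every word obtained by one of two operations: (i) delete the leftmost one; (ii) replace a $2$ lying left of the leftmost one (any $2$ if there are no ones) by $1_i$, with arbitrary $i$. For $r=1$ write $1$ for $1_1$; $\mathbb{YF}=\mathbb{YF}^1$. The map $s$ replaces every $1_i$ by $1$. Suffix notation. $h(w,v)$ is the number of letters of the longest common suffix of $w$ and $v$; $1_i\ne 1_j$ for $i\ne j$. $x[l]$ is $x$ with its last $l$ letters deleted. The restricted path count $d_r(x,y,l)$. For $x,y\in\mathbb{YF}^r$ with $h(x,y)\ge l$, let $u$ be their common suffix of $l$ letters, so $x=x'u$ and $y=y'u$. Then $d_r(x,y,l)$ is the number of downward paths in $\mathbb{YF}^r$ of the form $y=y_nu\to y_{n-1}u\to\dots\to y_mu=x$ with $|y_i|=i$ such that the words $y_i$ ($m\le i\le n$) do not all end with one and the same letter. $d_1(\cdot,\cdot,l)$ is the analogous count in $\mathbb{YF}$. *)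

theory Defs
  imports Complex_Main
begin

text \<open>Letters: One i stands for the one 1_i (with 1 \<le> i \<le> r), Two for the two.
  Words are lists of letters; the head of the list is the leftmost letter.\<close>

datatype letter = One nat | Two

definition valid_word :: "nat \<Rightarrow> letter list \<Rightarrow> bool" where
  "valid_word r x \<longleftrightarrow> (\<forall>i. One i \<in> set x \<longrightarrow> 1 \<le> i \<and> i \<le> r)"

fun digit :: "letter \<Rightarrow> nat" where
  "digit (One i) = 1"
| "digit Two = 2"

definition weight :: "letter list \<Rightarrow> nat" where
  "weight x = sum_list (map digit x)"

definition is_one :: "letter \<Rightarrow> bool" where
  "is_one a \<longleftrightarrow> (\<exists>i. a = One i)"

definition num_ones :: "letter list \<Rightarrow> nat" where
  "num_ones x = length (filter is_one x)"

definition down :: "nat \<Rightarrow> letter list \<Rightarrow> letter list \<Rightarrow> bool" where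
  "down r x y \<longleftrightarrow>
     (\<exists>p q i. x = p @ One i # q \<and> (\<forall>a\<in>set p. \<not> is_one a) \<and> y = p @ q)
   \<or> (\<exists>p q j. x = p @ Two # q \<and> (\<forall>a\<in>set p. \<not> is_one a) \<and> 1 \<le> j \<and> j \<le> r
              \<and> y = p @ One j # q)"

definition s_map :: "letter list \<Rightarrow> letter list" where
  "s_map x = map (\<lambda>a. case a of One i \<Rightarrow> One 1 | Two \<Rightarrow> Two) x"

fun lcp :: "letter list \<Rightarrow> letter list \<Rightarrow> nat" where
  "lcp (a # x) (b # y) = (if a = b then Suc (lcp x y) else 0)"
| "lcp _ _ = 0"

definition h :: "letter list \<Rightarrow> letter list \<Rightarrow> nat" where
  "h w v = lcp (rev w) (rev v)"

definition cut :: "letter list \<Rightarrow> nat \<Rightarrow> letter list" where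
  "cut x l = take (length x - l) x"

text \<open>d_r(x,y,l): paths are represented by the list [y_n, ..., y_m] of the
  prefixes (u = common suffix of length l).\<close>
definition d :: "nat \<Rightarrow> letter list \<Rightarrow> letter list \<Rightarrow> nat \<Rightarrow> nat" where
  "d r x y l = (let u = drop (length y - l) y in
     card {ys. ys \<noteq> [] \<and> hd ys = cut y l \<and> last ys = cut x l
              \<and> (\<forall>k. Suc k < length ys \<longrightarrow> down r (ys ! k @ u) (ys ! Suc k @ u))
              \<and> \<not> (\<exists>a. \<forall>z\<in>set ys. z \<noteq> [] \<and> last z = a)})"

end

theory Submission
  imports Defs
begin

(*
  An edge from y @ u to y' @ u is the same as an edge from y to y', so d_r(w,v,l) counts the
  paths from v' to w' in YF^r (where w = w' u, v = v' u) whose words do not all end with the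
  same letter. The map s sends these paths onto the corresponding paths of YF, and it remains to
  count the lifts of one such path p.

  An edge between two words that both contain a one keeps the last letter, so p passes through a
  word c without ones, and c is its own only preimage under s. Above c the lift is built from v'
  downwards: deleting the leftmost one lifts uniquely, while turning a two into a one lifts in r
  ways and uses up a two, which gives r^(t(v') - #c) lifts, t counting twos. Below c it is built
  from w' upwards: a deleted one has r possible indices, and a replaced two is determined, which
  gives r^(#c - #w') lifts. Altogether p has r^(t(v') - #w') = r^(#v' - #w' - e(v')) lifts.
*)

section \<open>Counting by fibres\<close>

(* card is 0 on infinite sets, so a positive count certifies finiteness *)
lemma finite_if_card_eq_power_int:
  assumes "real (card X) = real r powi k" "r \<ge> 1"
  shows "finite X"
proof (rule ccontr)
  assume "infinite X"
  with assms show False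
    using zero_less_power_int[of "real r" k] by simp
qed

lemma sum_power_int_eq_if_card_eq:
  assumes "card N = r" "r \<ge> 1" "\<And>x. x \<in> N \<Longrightarrow> e x = k - 1"
  shows "(\<Sum>x\<in>N. real r powi e x) = real r powi k"
proof -
  have "(\<Sum>x\<in>N. real r powi e x) = real r * real r powi (k - 1)"
    using assms(1,3) by simp
  also have "\<dots> = real r powi k"
    using assms(2) power_int_add_1'[of "real r" "k - 1"] by simp
  finally show ?thesis .
qed

lemma real_card_eq_card_mult_fibre:
  fixes f :: "'a \<Rightarrow> 'b" and c :: real
  assumes "f ` X \<subseteq> Y" "\<And>y. y \<in> Y \<Longrightarrow> real (card {x\<in>X. f x = y}) = c" "c > 0"
  shows "real (card X) = real (card Y) * c"
proof -
  have fibres: "finite {x\<in>X. f x = y}" "{x\<in>X. f x = y} \<noteq> {}" if "y \<in> Y" for y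
    using assms(2)[OF that] assms(3) card_gt_0_iff[of "{x\<in>X. f x = y}"] by simp_all
  have X: "X = (\<Union>y\<in>Y. {x\<in>X. f x = y})"
    using assms(1) by blast
  show ?thesis
  proof (cases "finite Y")
    case True
    then have "card X = (\<Sum>y\<in>Y. card {x\<in>X. f x = y})"
      using fibres(1) by (subst X) (rule card_UN_disjoint, auto)
    with True assms(2) show ?thesis by simp
  next
    case False
    have "Y \<subseteq> f ` X"
      using fibres(2) by blast
    with False have "infinite X"
      using finite_surj by blast
    with False show ?thesis by simp
  qed
qed

definition remove_nth :: "nat \<Rightarrow> 'a list \<Rightarrow> 'a list" where
  "remove_nth k xs = take k xs @ drop (Suc k) xs"

definition insert_nth :: "nat \<Rightarrow> 'a \<Rightarrow> 'a list \<Rightarrow> 'a list" where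
  "insert_nth k a xs = take k xs @ a # drop k xs"

lemma length_remove_nth [simp]: "k < length xs \<Longrightarrow> length (remove_nth k xs) = length xs - 1"
  by (simp add: remove_nth_def)

lemma length_insert_nth [simp]: "k \<le> length xs \<Longrightarrow> length (insert_nth k a xs) = Suc (length xs)"
  by (simp add: insert_nth_def)

lemma remove_nth_insert_nth [simp]: "k \<le> length xs \<Longrightarrow> remove_nth k (insert_nth k a xs) = xs"
  by (simp add: remove_nth_def insert_nth_def)

lemma insert_nth_nth_remove_nth: "k < length xs \<Longrightarrow> insert_nth k (xs ! k) (remove_nth k xs) = xs"
  by (simp add: insert_nth_def remove_nth_def min_absorb1 id_take_nth_drop[symmetric])

section \<open>Words\<close>

definition num_twos :: "letter list \<Rightarrow> nat" where
  "num_twos x = length (filter (\<lambda>a. a = Two) x)"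

definition first_one :: "letter list \<Rightarrow> nat" where
  "first_one x = length (takeWhile (\<lambda>a. a = Two) x)"

fun s_letter :: "letter \<Rightarrow> letter" where
  "s_letter (One i) = One 1"
| "s_letter Two = Two"

lemma is_one_iff: "is_one a \<longleftrightarrow> a \<noteq> Two"
  by (cases a) (auto simp: is_one_def)

lemma s_map_eq_map: "s_map x = map s_letter x"
  by (simp add: s_map_def fun_eq_iff split: letter.split)

lemma s_map_append [simp]: "s_map (x @ y) = s_map x @ s_map y"
  by (simp add: s_map_def)

lemma length_s_map [simp]: "length (s_map x) = length x"
  and s_map_eq_Nil_iff [simp]: "s_map x = [] \<longleftrightarrow> x = []"
  by (simp_all add: s_map_eq_map)

lemma s_letter_eq_Two_iff [simp]: "s_letter a = Two \<longleftrightarrow> a = Two"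
  by (cases a) auto

lemma num_ones_append [simp]: "num_ones (x @ y) = num_ones x + num_ones y"
  and num_ones_Cons [simp]: "num_ones (a # x) = (if a = Two then 0 else 1) + num_ones x"
  and num_ones_Nil [simp]: "num_ones [] = 0"
  by (simp_all add: num_ones_def is_one_iff)

lemma num_twos_append [simp]: "num_twos (x @ y) = num_twos x + num_twos y"
  and num_twos_Cons [simp]: "num_twos (a # x) = (if a = Two then 1 else 0) + num_twos x"
  and num_twos_Nil [simp]: "num_twos [] = 0"
  by (simp_all add: num_twos_def)

lemma length_eq_num_ones_add_num_twos: "length x = num_ones x + num_twos x"
  by (induction x) simp_all

lemma num_ones_eq_0_iff: "num_ones x = 0 \<longleftrightarrow> (\<forall>a\<in>set x. a = Two)"
  by (induction x) auto

lemma num_ones_s_map [simp]: "num_ones (s_map x) = num_ones x"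
  by (induction x) (simp_all add: s_map_eq_map)

lemma s_map_eq_self: "num_ones x = 0 \<Longrightarrow> s_map x = x"
  by (induction x) (simp_all add: s_map_eq_map split: if_splits)

lemma s_map_remove_nth [simp]: "s_map (remove_nth k x) = remove_nth k (s_map x)"
  by (simp add: s_map_eq_map remove_nth_def take_map drop_map)

lemma s_map_insert_nth [simp]: "s_map (insert_nth k a x) = insert_nth k (s_letter a) (s_map x)"
  by (simp add: s_map_eq_map insert_nth_def take_map drop_map)

lemma s_map_update [simp]: "s_map (x[k := a]) = (s_map x)[k := s_letter a]"
  by (simp add: s_map_eq_map map_update)

lemma last_s_map: "z \<noteq> [] \<Longrightarrow> last (s_map z) = s_letter (last z)"
  by (simp add: s_map_eq_map last_map)

lemma valid_word_append [simp]: "valid_word r (x @ y) \<longleftrightarrow> valid_word r x \<and> valid_word r y"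
  by (auto simp: valid_word_def)

lemma valid_word_if_num_ones_eq_0: "num_ones x = 0 \<Longrightarrow> valid_word r x"
  unfolding valid_word_def num_ones_eq_0_iff by force

lemma valid_word_s_map: "valid_word 1 (s_map x)"
  unfolding valid_word_def s_map_eq_map
proof (intro allI impI)
  fix i assume "One i \<in> set (map s_letter x)"
  then obtain a where "One i = s_letter a" by auto
  then show "1 \<le> i \<and> i \<le> 1" by (cases a) auto
qed

lemma valid_word_nth_One: "valid_word r x \<Longrightarrow> k < length x \<Longrightarrow> x ! k = One j \<Longrightarrow> 1 \<le> j \<and> j \<le> r"
  unfolding valid_word_def by (metis nth_mem)

lemma first_one_le_length: "first_one x \<le> length x"
  unfolding first_one_def by (rule length_takeWhile_le)

lemma take_first_one: "take (first_one x) x = replicate (first_one x) Two"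
proof -
  have "\<forall>a\<in>set (takeWhile (\<lambda>a. a = Two) x). a = Two"
    by (blast dest: set_takeWhileD)
  then show ?thesis
    unfolding first_one_def takeWhile_eq_take[symmetric] by (simp add: replicate_length_same)
qed

lemma take_le_first_one: "k \<le> first_one x \<Longrightarrow> take k x = replicate k Two"
  using take_first_one[of x] by (metis min.absorb1 take_replicate take_take)

lemma nth_less_first_one: "k < first_one x \<Longrightarrow> x ! k = Two"
  using take_first_one[of x] by (metis nth_replicate nth_take)

lemma nth_first_one:
  assumes "first_one x < length x"
  obtains i where "x ! first_one x = One i"
proof -
  have "x ! first_one x \<noteq> Two"
    using assms unfolding first_one_def by (rule nth_length_takeWhile)
  with that show ?thesis by (cases "x ! first_one x") auto
qed

lemma first_one_split:
  assumes "first_one x < length x"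
  obtains i where "x = take (first_one x) x @ One i # drop (Suc (first_one x)) x"
  using nth_first_one[OF assms] id_take_nth_drop[OF assms] by metis

lemma first_one_eq_length_iff: "first_one x = length x \<longleftrightarrow> num_ones x = 0"
  by (induction x) (simp_all add: first_one_def)

lemma first_one_less_length_iff: "first_one x < length x \<longleftrightarrow> num_ones x \<noteq> 0"
  using first_one_le_length[of x] first_one_eq_length_iff[of x] by linarith

lemma first_one_append:
  "first_one (x @ y) = (if num_ones x = 0 then length x + first_one y else first_one x)"
  by (simp add: first_one_def num_ones_eq_0_iff takeWhile_append)

lemma first_one_append_le: "first_one x \<le> first_one (x @ y)"
  using first_one_le_length[of x] by (simp add: first_one_append)

lemma first_one_s_map [simp]: "first_one (s_map x) = first_one x"
  by (simp add: first_one_def s_map_eq_map takeWhile_map comp_def)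

lemma valid_word_1_nth_first_one:
  assumes "valid_word 1 t" "first_one t < length t"
  shows "t ! first_one t = One 1"
proof -
  obtain i where "t ! first_one t = One i"
    using nth_first_one[OF assms(2)] by blast
  with valid_word_nth_One[OF assms] show ?thesis
    by (metis le_antisym)
qed

lemma
  assumes "first_one x < length x"
  shows num_ones_remove_first_one: "num_ones x = Suc (num_ones (remove_nth (first_one x) x))"
    and num_twos_remove_first_one: "num_twos (remove_nth (first_one x) x) = num_twos x"
proof -
  obtain i where x: "x = take (first_one x) x @ One i # drop (Suc (first_one x)) x"
    using first_one_split[OF assms] by blast
  have "remove_nth (first_one x) x = take (first_one x) x @ drop (Suc (first_one x)) x"
    by (simp add: remove_nth_def)
  then show "num_ones x = Suc (num_ones (remove_nth (first_one x) x))"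
    and "num_twos (remove_nth (first_one x) x) = num_twos x"
    using arg_cong[OF x, of num_ones] arg_cong[OF x, of num_twos] by simp_all
qed

lemma update_before_first_one_split:
  assumes "k < first_one x"
  shows "x = take k x @ Two # drop (Suc k) x" and "x[k := a] = take k x @ a # drop (Suc k) x"
proof -
  have k: "k < length x"
    using assms first_one_le_length by (rule less_le_trans)
  show "x = take k x @ Two # drop (Suc k) x"
    using id_take_nth_drop[OF k] nth_less_first_one[OF assms] by simp
  show "x[k := a] = take k x @ a # drop (Suc k) x"
    using k by (rule upd_conv_take_nth_drop)
qed

lemma num_twos_update_before_first_one:
  assumes "k < first_one x"
  shows "num_twos x = Suc (num_twos (x[k := One j]))"
  using arg_cong[OF update_before_first_one_split(1)[OF assms], of num_twos]
    update_before_first_one_split(2)[OF assms, of "One j"] by simp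

lemma update_before_first_one_eq_iff:
  assumes "k < first_one x" "k' < first_one x"
  shows "x[k := One i] = x[k' := One j] \<longleftrightarrow> k = k' \<and> i = j"
proof
  assume eq: "x[k := One i] = x[k' := One j]"
  have k: "k < length x"
    using assms(1) first_one_le_length[of x] by linarith
  have "x[k := One i] ! k = x[k' := One j] ! k"
    using eq by (rule arg_cong)
  with k show "k = k' \<and> i = j"
    using nth_less_first_one[OF assms(1)] by (cases "k = k'") simp_all
qed simp

section \<open>The edges of YF^r\<close>

lemma down_remove_first_one:
  assumes "first_one x < length x"
  shows "down r x (remove_nth (first_one x) x)"
proof -
  obtain i where "x = take (first_one x) x @ One i # drop (Suc (first_one x)) x"
    using first_one_split[OF assms] by blast
  moreover have "\<forall>b\<in>set (take (first_one x) x). \<not> is_one b"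
    by (simp add: take_first_one is_one_iff)
  ultimately show ?thesis
    unfolding down_def remove_nth_def by blast
qed

lemma down_update_before_first_one:
  assumes "k < first_one x" "1 \<le> j" "j \<le> r"
  shows "down r x (x[k := One j])"
proof -
  have "\<forall>b\<in>set (take k x). \<not> is_one b"
    using assms(1) by (simp add: take_le_first_one is_one_iff)
  then show ?thesis
    unfolding down_def using update_before_first_one_split[OF assms(1)] assms(2,3) by blast
qed

lemma down_iff:
  "down r x y \<longleftrightarrow>
     (first_one x < length x \<and> y = remove_nth (first_one x) x)
   \<or> (\<exists>k j. k < first_one x \<and> 1 \<le> j \<and> j \<le> r \<and> y = x[k := One j])"
proof
  assume "down r x y"
  then consider (delete) p i q where "x = p @ One i # q" "\<forall>b\<in>set p. \<not> is_one b" "y = p @ q"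
    | (replace) p j q where "x = p @ Two # q" "\<forall>b\<in>set p. \<not> is_one b" "1 \<le> j" "j \<le> r"
        "y = p @ One j # q"
    unfolding down_def by blast
  then show "(first_one x < length x \<and> y = remove_nth (first_one x) x)
    \<or> (\<exists>k j. k < first_one x \<and> 1 \<le> j \<and> j \<le> r \<and> y = x[k := One j])"
  proof cases
    case delete
    then have "first_one x = length p" by (simp add: first_one_def is_one_iff)
    with delete show ?thesis by (simp add: remove_nth_def)
  next
    case replace
    then have "length p < first_one x"
      by (simp add: first_one_def is_one_iff)
    with replace show ?thesis by auto
  qed
qed (use down_remove_first_one down_update_before_first_one in blast)

lemma down_cases:
  assumes "down r x y"
  obtains (delete) "first_one x < length x" "y = remove_nth (first_one x) x"
    | (replace) k j where "k < first_one x" "1 \<le> j" "j \<le> r" "y = x[k := One j]"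
  using assms unfolding down_iff by blast

lemma down_append:
  assumes "down r y y'"
  shows "down r (y @ u) (y' @ u)"
  using assms
proof (cases rule: down_cases)
  case delete
  then have "first_one (y @ u) = first_one y"
    by (simp add: first_one_append first_one_less_length_iff)
  with delete show ?thesis
    by (simp add: down_iff remove_nth_def)
next
  case (replace k j)
  then have "k < first_one (y @ u)" and "k < length y"
    using first_one_append_le[of y u] first_one_le_length[of y] by linarith+
  moreover have "y' @ u = (y @ u)[k := One j]"
    using replace(4) \<open>k < length y\<close> by (simp add: list_update_append1)
  ultimately show ?thesis
    using replace(2,3) unfolding down_iff by blast
qed

lemma down_append_cancel:
  assumes "down r (y @ u) (y' @ u)"
  shows "down r y y'"
  using assms
proof (cases rule: down_cases)
  case delete
  show ?thesis
  proof (cases "num_ones y = 0")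
    case True
    have "num_ones (y @ u) = Suc (num_ones (y' @ u))"
      using num_ones_remove_first_one[OF delete(1)] delete(2) by simp
    with True show ?thesis by simp
  next
    case False
    then have "first_one (y @ u) = first_one y" "first_one y < length y"
      by (simp_all add: first_one_append first_one_less_length_iff)
    with delete show ?thesis
      by (simp add: down_iff remove_nth_def)
  qed
next
  case (replace k j)
  have len: "length y' = length y"
    using arg_cong[OF replace(4), of length] by simp
  show ?thesis
  proof (cases "k < length y")
    case True
    then have "k < first_one y"
      using replace(1) first_one_eq_length_iff[of y]
      by (auto simp: first_one_append split: if_splits)
    moreover have "y' = y[k := One j]"
      using replace(4) True by (simp add: list_update_append1)
    ultimately show ?thesis using replace(2,3) by (auto simp: down_iff)
  next
    case False
    then have "(y' @ u) ! k = u ! (k - length y)" "(y @ u) ! k = u ! (k - length y)"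
      using len by (simp_all add: nth_append)
    moreover have "k < length (y @ u)"
      using replace(1) first_one_le_length[of "y @ u"] by linarith
    ultimately show ?thesis
      using replace(4) nth_less_first_one[OF replace(1)] by simp
  qed
qed

lemma down_append_iff: "down r (y @ u) (y' @ u) \<longleftrightarrow> down r y y'"
  using down_append down_append_cancel by blast

lemma valid_word_down:
  assumes "valid_word r x" "down r x y"
  shows "valid_word r y"
  using assms(2)
proof (cases rule: down_cases)
  case delete
  then have "set y \<subseteq> set x"
    by (auto simp: remove_nth_def dest: in_set_takeD in_set_dropD)
  with assms(1) show ?thesis by (auto simp: valid_word_def)
next
  case (replace k j)
  then have "set y \<subseteq> insert (One j) (set x)" by (simp add: set_update_subset_insert)
  with assms(1) replace(2,3) show ?thesis by (auto simp: valid_word_def)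
qed

lemma valid_word_successively_down:
  "successively (down r) ys \<Longrightarrow> valid_word r (hd ys) \<Longrightarrow> z \<in> set ys \<Longrightarrow> valid_word r z"
  by (induction "down r" ys rule: successively.induct) (auto intro: valid_word_down)

lemma down_s_map:
  assumes "down r x y"
  shows "down 1 (s_map x) (s_map y)"
  using assms
proof (cases rule: down_cases)
  case delete
  then show ?thesis by (simp add: down_iff)
next
  case (replace k j)
  then show ?thesis unfolding down_iff by auto
qed

lemma successively_down_s_map:
  "successively (down r) ys \<Longrightarrow> successively (down 1) (map s_map ys)"
  unfolding successively_map by (erule successively_mono) (rule down_s_map)

lemma last_down:
  assumes "down r x y" "num_ones x \<noteq> 0" "num_ones y \<noteq> 0"
  shows "last y = last x"
  using assms(1)
proof (cases rule: down_cases)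
  case delete
  have "drop (Suc (first_one x)) x \<noteq> []"
  proof
    assume "drop (Suc (first_one x)) x = []"
    then have "y = replicate (first_one x) Two"
      using delete(2) by (simp add: remove_nth_def take_first_one)
    with assms(3) show False by (simp add: num_ones_eq_0_iff)
  qed
  then show ?thesis
    using delete(2) by (simp add: remove_nth_def)
next
  case (replace k j)
  have "k \<noteq> length x - 1"
    using replace(1) first_one_le_length[of x] first_one_less_length_iff[of x] assms(2) by linarith
  moreover have "x \<noteq> []" using assms(2) by auto
  ultimately show ?thesis
    using replace(4) by (simp add: last_list_update)
qed

lemma last_eq_if_all_have_ones:
  "successively (down r) ys \<Longrightarrow> \<forall>z\<in>set ys. num_ones z \<noteq> 0 \<Longrightarrow> z \<in> set ys
    \<Longrightarrow> last z = last (hd ys)"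
  by (induction "down r" ys rule: successively.induct) (auto dest: last_down)

section \<open>Paths of YF^r and their images under s\<close>

definition no_common_last :: "letter list list \<Rightarrow> bool" where
  "no_common_last ys \<longleftrightarrow> \<not> (\<exists>a. \<forall>z\<in>set ys. z \<noteq> [] \<and> last z = a)"

definition paths :: "nat \<Rightarrow> letter list \<Rightarrow> letter list \<Rightarrow> letter list list set" where
  "paths r a b = {ys. ys \<noteq> [] \<and> hd ys = a \<and> last ys = b \<and> successively (down r) ys
                      \<and> no_common_last ys}"

lemma common_prefix_if_le_lcp: "l \<le> lcp x y \<Longrightarrow> \<exists>z x' y'. x = z @ x' \<and> y = z @ y' \<and> length z = l"
proof (induction x y arbitrary: l rule: lcp.induct)
  case (1 a x b y)
  show ?case
  proof (cases l)
    case (Suc m)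
    with "1.prems" have "a = b" "m \<le> lcp x y"
      by (auto split: if_splits)
    with "1.IH" Suc show ?thesis
      by (metis append_Cons length_Cons)
  qed simp
qed simp_all

lemma common_suffix_if_le_h:
  assumes "l \<le> h w v"
  obtains u w' v' where "w = w' @ u" "v = v' @ u" "length u = l"
proof -
  obtain z x' y' where "rev w = z @ x'" "rev v = z @ y'" "length z = l"
    using common_prefix_if_le_lcp assms unfolding h_def by blast
  then have "w = rev x' @ rev z" "v = rev y' @ rev z" "length (rev z) = l"
    by (simp_all add: rev_swap)
  then show ?thesis by (rule that)
qed

lemma d_eq_card_paths:
  assumes "x = x' @ u" "y = y' @ u" "length u = l"
  shows "d r x y l = card (paths r y' x')"
proof -
  have u: "drop (length y - l) y = u" and cut: "cut y l = y'" "cut x l = x'"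
    using assms by (simp_all add: cut_def)
  show ?thesis
    unfolding d_def Let_def u cut paths_def no_common_last_def successively_conv_nth down_append_iff
    by (rule refl)
qed

lemma ex_one_free_if_no_common_last:
  assumes "successively (down r) ys" "no_common_last ys"
  shows "\<exists>z\<in>set ys. num_ones z = 0"
proof (rule ccontr)
  assume "\<not> ?thesis"
  then have ones: "\<forall>z\<in>set ys. num_ones z \<noteq> 0" by simp
  then have "\<forall>z\<in>set ys. z \<noteq> [] \<and> last z = last (hd ys)"
    using last_eq_if_all_have_ones[OF assms(1) ones] by (metis num_ones_Nil)
  with assms(2) show False unfolding no_common_last_def by blast
qed

lemma no_common_last_map_s_map_iff:
  assumes "successively (down r) ys"
  shows "no_common_last (map s_map ys) \<longleftrightarrow> no_common_last ys"
  unfolding no_common_last_def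
proof (intro iffI notI)
  assume "\<exists>a. \<forall>z\<in>set ys. z \<noteq> [] \<and> last z = a"
  then obtain a where "\<forall>z\<in>set ys. z \<noteq> [] \<and> last z = a" by blast
  then have "\<forall>z\<in>set (map s_map ys). z \<noteq> [] \<and> last z = s_letter a"
    using last_s_map by auto
  moreover assume "\<not> (\<exists>a. \<forall>z\<in>set (map s_map ys). z \<noteq> [] \<and> last z = a)"
  ultimately show False by blast
next
  assume ys: "\<not> (\<exists>a. \<forall>z\<in>set ys. z \<noteq> [] \<and> last z = a)"
  then obtain z0 where z0: "z0 \<in> set ys" "num_ones z0 = 0"
    using ex_one_free_if_no_common_last[OF assms] unfolding no_common_last_def by blast
  assume "\<exists>a. \<forall>z\<in>set (map s_map ys). z \<noteq> [] \<and> last z = a"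
  then obtain a where "\<forall>z\<in>set ys. s_map z \<noteq> [] \<and> last (s_map z) = a"
    by auto
  then have a: "\<forall>z\<in>set ys. z \<noteq> [] \<and> s_letter (last z) = a"
    by (metis last_s_map s_map_eq_Nil_iff)
  then have "a = Two"
    using z0 by (metis last_in_set num_ones_eq_0_iff s_letter.simps(2))
  with a have "\<forall>z\<in>set ys. z \<noteq> [] \<and> last z = Two"
    by simp
  with ys show False by blast
qed

section \<open>Lifting paths along s\<close>

definition lifts :: "nat \<Rightarrow> letter list \<Rightarrow> letter list list \<Rightarrow> letter list \<Rightarrow> letter list list set"
  where "lifts r a p b =
    {ys. successively (down r) ys \<and> map s_map ys = p \<and> hd ys = a \<and> last ys = b}"

lemma lifts_Cons:
  assumes "p \<noteq> []"
  shows "lifts r a (s_map a # p) b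
    = (#) a ` (\<Union>a'\<in>{a'. down r a a' \<and> s_map a' = hd p}. lifts r a' p b)"
proof (intro equalityI subsetI)
  fix ys assume ys: "ys \<in> lifts r a (s_map a # p) b"
  then obtain ys' where ys': "ys = a # ys'" "map s_map ys' = p"
    by (cases ys) (auto simp: lifts_def)
  moreover from ys'(2) assms have "ys' \<noteq> []" by auto
  ultimately have "down r a (hd ys')" "s_map (hd ys') = hd p" "ys' \<in> lifts r (hd ys') p b"
    using ys by (auto simp: lifts_def successively_Cons hd_map)
  with ys' show "ys \<in> (#) a ` (\<Union>a'\<in>{a'. down r a a' \<and> s_map a' = hd p}. lifts r a' p b)"
    by blast
next
  fix ys assume "ys \<in> (#) a ` (\<Union>a'\<in>{a'. down r a a' \<and> s_map a' = hd p}. lifts r a' p b)"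
  with assms show "ys \<in> lifts r a (s_map a # p) b"
    by (auto simp: lifts_def successively_Cons)
qed

lemma card_lifts_Cons:
  fixes r :: nat and a b :: "letter list" and p :: "letter list list"
    and e :: "letter list \<Rightarrow> int"
  defines "N \<equiv> {a'. down r a a' \<and> s_map a' = hd p}"
  assumes "r \<ge> 1" "p \<noteq> []" "finite N"
    and count: "\<And>a'. a' \<in> N \<Longrightarrow> real (card (lifts r a' p b)) = real r powi e a'"
  shows "real (card (lifts r a (s_map a # p) b)) = (\<Sum>a'\<in>N. real r powi e a')"
proof -
  have "card (lifts r a (s_map a # p) b) = card (\<Union>a'\<in>N. lifts r a' p b)"
    unfolding lifts_Cons[OF assms(3)] N_def by (rule card_image) simp
  also have "\<dots> = (\<Sum>a'\<in>N. card (lifts r a' p b))"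
    using assms(2,4) count
    by (intro card_UN_disjoint) (auto simp: lifts_def intro: finite_if_card_eq_power_int)
  finally show ?thesis
    using count by simp
qed

lemma lifts_snoc:
  assumes "valid_word r c" "p \<noteq> []"
  shows "lifts r c (p @ [s_map b]) b = (\<lambda>ys. ys @ [b]) `
    (\<Union>b'\<in>{b'. valid_word r b' \<and> down r b' b \<and> s_map b' = last p}. lifts r c p b')"
proof (intro equalityI subsetI)
  fix ys assume ys: "ys \<in> lifts r c (p @ [s_map b]) b"
  then obtain ys' where ys': "ys = ys' @ [b]" "map s_map ys' = p"
    by (cases ys rule: rev_cases) (auto simp: lifts_def)
  moreover from ys'(2) assms(2) have "ys' \<noteq> []" by auto
  ultimately have path: "successively (down r) ys'" and "hd ys' = c"
    and "down r (last ys') b" "s_map (last ys') = last p" "ys' \<in> lifts r c p (last ys')"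
    using ys by (auto simp: lifts_def successively_append_iff last_map)
  moreover have "valid_word r (last ys')"
    using valid_word_successively_down[OF path] \<open>ys' \<noteq> []\<close> \<open>hd ys' = c\<close> assms(1) by simp
  ultimately show "ys \<in> (\<lambda>ys. ys @ [b]) `
      (\<Union>b'\<in>{b'. valid_word r b' \<and> down r b' b \<and> s_map b' = last p}. lifts r c p b')"
    using ys' by blast
next
  fix ys assume "ys \<in> (\<lambda>ys. ys @ [b]) `
      (\<Union>b'\<in>{b'. valid_word r b' \<and> down r b' b \<and> s_map b' = last p}. lifts r c p b')"
  with assms(2) show "ys \<in> lifts r c (p @ [s_map b]) b"
    by (auto simp: lifts_def successively_append_iff)
qed

lemma card_lifts_snoc:
  fixes r :: nat and b c :: "letter list" and p :: "letter list list"
    and e :: "letter list \<Rightarrow> int"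
  defines "B \<equiv> {b'. valid_word r b' \<and> down r b' b \<and> s_map b' = last p}"
  assumes "r \<ge> 1" "valid_word r c" "p \<noteq> []" "finite B"
    and count: "\<And>b'. b' \<in> B \<Longrightarrow> real (card (lifts r c p b')) = real r powi e b'"
  shows "real (card (lifts r c (p @ [s_map b]) b)) = (\<Sum>b'\<in>B. real r powi e b')"
proof -
  have "card (lifts r c (p @ [s_map b]) b) = card (\<Union>b'\<in>B. lifts r c p b')"
    unfolding lifts_snoc[OF assms(3,4)] B_def by (rule card_image) (simp add: inj_on_def)
  also have "\<dots> = (\<Sum>b'\<in>B. card (lifts r c p b'))"
    using assms(2,5) count
    by (intro card_UN_disjoint) (auto simp: lifts_def intro: finite_if_card_eq_power_int)
  finally show ?thesis
    using count by simp
qed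

lemma successors_delete:
  assumes "first_one a < length a"
  shows "{a'. down r a a' \<and> s_map a' = remove_nth (first_one a) (s_map a)}
    = {remove_nth (first_one a) a}"
proof (intro equalityI subsetI)
  fix a' assume "a' \<in> {a'. down r a a' \<and> s_map a' = remove_nth (first_one a) (s_map a)}"
  then have step: "down r a a'" and s: "s_map a' = remove_nth (first_one a) (s_map a)"
    by simp_all
  have "length a' = length a - 1"
    using arg_cong[OF s, of length] assms by simp
  with step assms show "a' \<in> {remove_nth (first_one a) a}"
    by (cases rule: down_cases) simp_all
qed (use assms in \<open>simp add: down_remove_first_one\<close>)

lemma successors_replace:
  assumes "k < first_one a"
  shows "{a'. down r a a' \<and> s_map a' = (s_map a)[k := One 1]} = (\<lambda>j. a[k := One j]) ` {1..r}"
proof (intro equalityI subsetI)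
  fix a' assume "a' \<in> {a'. down r a a' \<and> s_map a' = (s_map a)[k := One 1]}"
  then have step: "down r a a'" and s: "s_map a' = (s_map a)[k := One 1]"
    by simp_all
  have len: "length a' = length a"
    using arg_cong[OF s, of length] by simp
  from step show "a' \<in> (\<lambda>j. a[k := One j]) ` {1..r}"
  proof (cases rule: down_cases)
    case delete
    then show ?thesis using len by simp
  next
    case (replace k' j)
    then have "(s_map a)[k' := One 1] = (s_map a)[k := One 1]"
      using s by simp
    then have "k' = k"
      using update_before_first_one_eq_iff[of k' "s_map a" k] replace(1) assms by simp
    with replace show ?thesis by simp
  qed
qed (use assms in \<open>auto intro: down_update_before_first_one\<close>)

lemma successors_cases:
  fixes r :: nat and a t :: "letter list"
  defines "N \<equiv> {a'. down r a a' \<and> s_map a' = t}"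
  assumes "down 1 (s_map a) t"
  obtains (delete) a' where "N = {a'}" "num_twos a' = num_twos a"
    | (replace) "finite N" "card N = r" "\<forall>a'\<in>N. Suc (num_twos a') = num_twos a"
  using assms(2)
proof (cases rule: down_cases)
  case delete
  then have "N = {remove_nth (first_one a) a}"
    unfolding N_def using successors_delete[of a r] by simp
  with delete show ?thesis
    using that(1) num_twos_remove_first_one[of a] by simp
next
  case (replace k j)
  then have k: "k < first_one a" and N: "N = (\<lambda>j. a[k := One j]) ` {1..r}"
    unfolding N_def using successors_replace[of k a r] by simp_all
  have "inj_on (\<lambda>j. a[k := One j]) {1..r}"
    using update_before_first_one_eq_iff[OF k k] by (simp add: inj_on_def)
  then have "card N = r"
    unfolding N by (simp add: card_image)
  with N show ?thesis
    using that(2) num_twos_update_before_first_one[OF k] by auto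
qed

lemma predecessors_delete:
  assumes "valid_word 1 t" "first_one t < length t" "s_map b = remove_nth (first_one t) t"
    "valid_word r b"
  shows "{b'. valid_word r b' \<and> down r b' b \<and> s_map b' = t}
    = (\<lambda>j. insert_nth (first_one t) (One j) b) ` {1..r}"
proof (intro equalityI subsetI)
  have len_b: "Suc (length b) = length t"
    using arg_cong[OF assms(3), of length] assms(2) by simp
  fix b' assume "b' \<in> {b'. valid_word r b' \<and> down r b' b \<and> s_map b' = t}"
  then have valid: "valid_word r b'" and step: "down r b' b" and s: "s_map b' = t"
    by simp_all
  have first: "first_one b' = first_one t" and len: "length b' = length t"
    using s by auto
  from step show "b' \<in> (\<lambda>j. insert_nth (first_one t) (One j) b) ` {1..r}"
  proof (cases rule: down_cases)
    case delete
    obtain j where j: "b' ! first_one t = One j"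
      using nth_first_one[OF delete(1)] first by metis
    with delete first have "b' = insert_nth (first_one t) (One j) b"
      using insert_nth_nth_remove_nth[of "first_one t" b'] by simp
    moreover have "j \<in> {1..r}"
      using valid_word_nth_One[OF valid] j delete(1) first by simp
    ultimately show ?thesis by blast
  next
    case replace
    then show ?thesis using len len_b by simp
  qed
next
  fix b' assume "b' \<in> (\<lambda>j. insert_nth (first_one t) (One j) b) ` {1..r}"
  then obtain j where j: "1 \<le> j" "j \<le> r" and b': "b' = insert_nth (first_one t) (One j) b"
    by auto
  have f: "first_one t \<le> length b"
    using arg_cong[OF assms(3), of length] assms(2) by simp
  have "set b' \<subseteq> insert (One j) (set b)"
    unfolding b' insert_nth_def by (auto dest: in_set_takeD in_set_dropD)
  then have "valid_word r b'"
    using assms(4) j by (auto simp: valid_word_def)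
  moreover have "s_map b' = t"
    using insert_nth_nth_remove_nth[OF assms(2)] valid_word_1_nth_first_one[OF assms(1,2)]
    by (simp add: b' assms(3))
  moreover have "down r b' b"
    using down_remove_first_one[of b' r] \<open>s_map b' = t\<close> assms(2) f
    by (metis first_one_s_map length_s_map b' remove_nth_insert_nth)
  ultimately show "b' \<in> {b'. valid_word r b' \<and> down r b' b \<and> s_map b' = t}"
    by simp
qed

lemma predecessors_replace:
  assumes "k < first_one t" "s_map b = t[k := One 1]" "valid_word r b"
  shows "{b'. valid_word r b' \<and> down r b' b \<and> s_map b' = t} = {b[k := Two]}"
proof (intro equalityI subsetI)
  have len_b: "length b = length t"
    using arg_cong[OF assms(2), of length] by simp
  fix b' assume "b' \<in> {b'. valid_word r b' \<and> down r b' b \<and> s_map b' = t}"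
  then have step: "down r b' b" and s: "s_map b' = t"
    by simp_all
  have first: "first_one b' = first_one t" and len: "length b' = length t"
    using s by auto
  from step show "b' \<in> {b[k := Two]}"
  proof (cases rule: down_cases)
    case delete
    then show ?thesis using len len_b by simp
  next
    case (replace k' j)
    then have "t[k' := One 1] = t[k := One 1]"
      using assms(2) s by simp
    then have "k' = k"
      using update_before_first_one_eq_iff[of k' t k] replace(1) first assms(1) by simp
    then have "b[k := Two] = b'[k := Two]"
      using replace(4) by simp
    also have "\<dots> = b'"
      using nth_less_first_one[of k b'] assms(1) first by (metis list_update_id)
    finally show ?thesis by simp
  qed
next
  have kt: "k < length t"
    using assms(1) first_one_le_length[of t] by linarith
  then have k: "k < length b"
    using arg_cong[OF assms(2), of length] by simp
  fix b' assume "b' \<in> {b[k := Two]}"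
  then have b': "b' = b[k := Two]" by simp
  have "set b' \<subseteq> insert Two (set b)"
    unfolding b' by (rule set_update_subset_insert)
  then have "valid_word r b'"
    using assms(3) by (auto simp: valid_word_def)
  moreover have "s_map b' = t"
    using assms(2) nth_less_first_one[OF assms(1)] by (simp add: b') (metis list_update_id)
  moreover obtain j where j: "b ! k = One j"
    using arg_cong[OF assms(2), of "\<lambda>x. x ! k"] k kt by (cases "b ! k") (simp_all add: s_map_eq_map)
  moreover have "1 \<le> j \<and> j \<le> r"
    using valid_word_nth_One[OF assms(3) k j] .
  moreover have "b'[k := One j] = b"
    using j by (simp add: b') (metis list_update_id)
  ultimately show "b' \<in> {b'. valid_word r b' \<and> down r b' b \<and> s_map b' = t}"
    using down_update_before_first_one[of k b' j r] assms(1) by auto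
qed

lemma predecessors_cases:
  fixes r :: nat and t b :: "letter list"
  defines "B \<equiv> {b'. valid_word r b' \<and> down r b' b \<and> s_map b' = t}"
  assumes "down 1 t (s_map b)" "valid_word 1 t" "valid_word r b"
  obtains (delete) "finite B" "card B = r" "\<forall>b'\<in>B. length b' = Suc (length b)"
    | (replace) b' where "B = {b'}" "length b' = length b"
  using assms(2)
proof (cases rule: down_cases)
  case delete
  have "length b = length t - 1"
    using arg_cong[OF delete(2), of length] delete(1) by (simp only: length_s_map length_remove_nth)
  then have f: "first_one t \<le> length b"
    using delete(1) by linarith
  have B: "B = (\<lambda>j. insert_nth (first_one t) (One j) b) ` {1..r}"
    unfolding B_def using predecessors_delete[OF assms(3) delete(1)] delete(2) assms(4) by simp
  have "inj_on (\<lambda>j. insert_nth (first_one t) (One j) b) {1..r}"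
    using f by (auto simp: inj_on_def insert_nth_def nth_append
        dest!: arg_cong[of _ _ "\<lambda>x. x ! first_one t"])
  then have "card B = r"
    unfolding B by (simp add: card_image)
  with B f show ?thesis
    using that(1) by auto
next
  case (replace k j)
  then have "B = {b[k := Two]}"
    unfolding B_def using predecessors_replace[of k t b r] assms(4) by simp
  then show ?thesis
    using that(2) by simp
qed

lemma lifts_singleton: "num_ones c = 0 \<Longrightarrow> lifts r c [c] c = {[c]}"
  by (auto simp: lifts_def s_map_eq_self map_eq_Cons_conv)

lemma card_lifts_from_one_free:
  assumes "r \<ge> 1" "num_ones c = 0" "successively (down 1) p" "p \<noteq> []" "hd p = c"
    "\<forall>z\<in>set p. valid_word 1 z" "valid_word r b" "last p = s_map b"
  shows "real (card (lifts r c p b)) = real r powi (int (length c) - int (length b))"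
  using assms(3-)
proof (induction p arbitrary: b rule: rev_induct)
  case (snoc t' p)
  show ?case
  proof (cases "p = []")
    case True
    then have "b = c"
      using snoc.prems assms(2) s_map_eq_self[of b] by simp
    with True snoc.prems show ?thesis
      using lifts_singleton[OF assms(2)] by simp
  next
    case False
    define B where "B = {b'. valid_word r b' \<and> down r b' b \<and> s_map b' = last p}"
    have step: "down 1 (last p) (s_map b)" and path: "successively (down 1) p" and "t' = s_map b"
      using snoc.prems(1,6) False by (auto simp: successively_append_iff)
    have sum: "real (card (lifts r c (p @ [t']) b))
        = (\<Sum>b'\<in>B. real r powi (int (length c) - int (length b')))" if "finite B"
      unfolding \<open>t' = s_map b\<close> B_def
      using assms(1) valid_word_if_num_ones_eq_0[OF assms(2)] False that
        snoc.IH[OF path False] snoc.prems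
      by (intro card_lifts_snoc) (simp_all add: B_def)
    have "valid_word 1 (last p)"
      using snoc.prems(4) False by simp
    from step this snoc.prems(5) show ?thesis
    proof (cases rule: predecessors_cases[where r = r])
      case delete
      then have "(\<Sum>b'\<in>B. real r powi (int (length c) - int (length b')))
          = real r powi (int (length c) - int (length b))"
        unfolding B_def by (intro sum_power_int_eq_if_card_eq[OF _ assms(1)]) auto
      with sum delete show ?thesis
        unfolding B_def by simp
    next
      case (replace b')
      with sum show ?thesis
        unfolding B_def by simp
    qed
  qed
qed simp

lemma card_lifts:
  assumes "r \<ge> 1" "valid_word r a" "successively (down 1) p" "p \<noteq> []" "hd p = s_map a"
    "\<forall>z\<in>set p. valid_word 1 z" "\<exists>z\<in>set p. num_ones z = 0" "valid_word r b" "last p = s_map b"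
  shows "real (card (lifts r a p b)) = real r powi (int (num_twos a) - int (length b))"
  using assms(2-)
proof (induction p arbitrary: a)
  case (Cons x p)
  show ?case
  proof (cases "num_ones a = 0")
    case True
    then have "s_map a = a" "num_twos a = length a"
      using s_map_eq_self length_eq_num_ones_add_num_twos[of a] by simp_all
    with True Cons.prems show ?thesis
      using card_lifts_from_one_free[OF assms(1) True, of "x # p" b] by simp
  next
    case False
    then have "p \<noteq> []" and "\<exists>z\<in>set p. num_ones z = 0"
      using Cons.prems(4,6) by auto
    define N where "N = {a'. down r a a' \<and> s_map a' = hd p}"
    have x: "x = s_map a"
      using Cons.prems(4) by simp
    have step: "down 1 (s_map a) (hd p)" and path: "successively (down 1) p"
      using Cons.prems(2) x \<open>p \<noteq> []\<close> by (auto simp: successively_Cons)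
    have sum: "real (card (lifts r a (x # p) b))
        = (\<Sum>a'\<in>N. real r powi (int (num_twos a') - int (length b)))" if "finite N"
      unfolding x N_def
      using assms(1) \<open>p \<noteq> []\<close> that Cons.IH Cons.prems path \<open>\<exists>z\<in>set p. num_ones z = 0\<close>
        valid_word_down[OF Cons.prems(1)]
      by (intro card_lifts_Cons) (simp_all add: N_def)
    from step show ?thesis
    proof (cases rule: successors_cases[where r = r])
      case (delete a')
      then show ?thesis
        using sum unfolding N_def by simp
    next
      case replace
      then have "(\<Sum>a'\<in>N. real r powi (int (num_twos a') - int (length b)))
          = real r powi (int (num_twos a) - int (length b))"
        unfolding N_def by (intro sum_power_int_eq_if_card_eq[OF _ assms(1)]) force+
      with sum replace show ?thesis
        unfolding N_def by simp
    qed
  qed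
qed simp

lemma card_paths:
  assumes "r \<ge> 1" "valid_word r a" "valid_word r b"
  shows "real (card (paths r a b))
    = real (card (paths 1 (s_map a) (s_map b))) * real r powi (int (num_twos a) - int (length b))"
proof (rule real_card_eq_card_mult_fibre)
  show "map s_map ` paths r a b \<subseteq> paths 1 (s_map a) (s_map b)"
  proof
    fix p assume "p \<in> map s_map ` paths r a b"
    then obtain ys where "ys \<in> paths r a b" and p: "p = map s_map ys" by blast
    then show "p \<in> paths 1 (s_map a) (s_map b)"
      using successively_down_s_map no_common_last_map_s_map_iff
      by (auto simp: paths_def hd_map last_map)
  qed
next
  fix p assume p: "p \<in> paths 1 (s_map a) (s_map b)"
  then have "{ys \<in> paths r a b. map s_map ys = p} = lifts r a p b"
    by (auto simp: paths_def lifts_def no_common_last_map_s_map_iff[symmetric])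
  moreover have "\<forall>z\<in>set p. valid_word 1 z"
    using p valid_word_successively_down[of 1 p] valid_word_s_map[of a] by (auto simp: paths_def)
  moreover have "\<exists>z\<in>set p. num_ones z = 0"
    using p ex_one_free_if_no_common_last[of 1 p] by (auto simp: paths_def)
  ultimately show "real (card {ys \<in> paths r a b. map s_map ys = p})
      = real r powi (int (num_twos a) - int (length b))"
    using card_lifts[OF assms(1,2)] assms(3) p by (auto simp: paths_def)
qed (use assms(1) in simp)

theorem mainTheorem5:
  fixes r l :: nat and w v :: "letter list"
  assumes "r \<ge> 1" and "valid_word r w" and "valid_word r v" and "h w v \<ge> l"
  shows "real (d r w v l) = real (d 1 (s_map w) (s_map v) l)
           * (real r) powi (int (length v) - int (length w) - int (num_ones (cut v l)))"
proof -
  obtain u w' v' where w: "w = w' @ u" and v: "v = v' @ u" and u: "length u = l"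
    using common_suffix_if_le_h[OF assms(4)] .
  have "d r w v l = card (paths r v' w')"
    using w v u by (rule d_eq_card_paths)
  moreover have "d 1 (s_map w) (s_map v) l = card (paths 1 (s_map v') (s_map w'))"
    using w v u by (intro d_eq_card_paths[of _ _ "s_map u"]) simp_all
  moreover have "cut v l = v'"
    using v u by (simp add: cut_def)
  then have "int (length v) - int (length w) - int (num_ones (cut v l))
      = int (num_twos v') - int (length w')"
    using w v length_eq_num_ones_add_num_twos[of v'] by simp
  moreover have "valid_word r v'" "valid_word r w'"
    using assms(2,3) w v by simp_all
  ultimately show ?thesis
    using card_paths[OF assms(1)] by simp
qed

end
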